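(* Fix a single machine with nonnegative real parameters $k^A,k^B,t^A,t^B$, and let $f(a,b)$, $cost^A$, $cost^B$, $mcost^A$ and $cost(a,b,s)$ be as defined in the context. Then for all integers $a,b\ge 0$, $$f(a,b)=\min_{0\le s\le \min(b,a+1)} cost(a,b,s).$$
   Context: A machine processes jobs of two types, A and B, in batches. A schedule for the task-combination $(a,b)$ is a finite sequence of batches, each a nonempty group of jobs of a single type, with consecutive batches of different types, processing exactly $a$ A-jobs and $b$ B-jobs in total. An A-batch of $x$ jobs takes $t^A+k^A x^2$ time units, a B-batch of $x$ jobs takes $t^B+k^B x^2$ time units; the time of a schedule is the sum of its batch times (empty schedule: time $0$). $f(a,b)$ is the minimum time over all schedules for $(a,b)$. For integers $a,s\ge 0$ define $cost^A(a,s)=\min\{s\,t^A+k^A(x_1^2+\dots+x_s^2) : x_1+\dots+x_s=a,\ x_i\in\mathbb{Z}_{\ge 0}\}$ (empty batches allowed here), with $cost^A(0,0)=0$ and $cost^A(a,0)=+\infty$ for $a>0$; $cost^B(b,s)$ is defined analogously with $t^B,k^B$. Define $mcost^A(a,s)=\min\{cost^A(a,s') : s'\in\{s-1,s,s+1\},\ s'\ge 0\}$ and $cost(a,b,s)=cost^B(b,s)+mcost^A(a,s)$, with the usual arithmetic conventions for $+\infty$. *)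

theory Defs
  imports Complex_Main "HOL-Library.Extended_Real"
begin

datatype jobtype = TA | TB

type_synonym batch = "jobtype \<times> nat"
type_synonym schedule = "batch list"

definition valid_schedule :: "nat \<Rightarrow> nat \<Rightarrow> schedule \<Rightarrow> bool" where
  "valid_schedule a b S \<longleftrightarrow>
     (\<forall>bt \<in> set S. snd bt > 0) \<and>
     (\<forall>i. Suc i < length S \<longrightarrow> fst (S ! i) \<noteq> fst (S ! Suc i)) \<and>
     sum_list (map snd (filter (\<lambda>bt. fst bt = TA) S)) = a \<and>
     sum_list (map snd (filter (\<lambda>bt. fst bt = TB) S)) = b"

definition batch_time :: "real \<Rightarrow> real \<Rightarrow> real \<Rightarrow> real \<Rightarrow> batch \<Rightarrow> real" where
  "batch_time kA kB tA tB bt =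
     (case fst bt of TA \<Rightarrow> tA + kA * (real (snd bt))^2
                   | TB \<Rightarrow> tB + kB * (real (snd bt))^2)"

definition sched_time :: "real \<Rightarrow> real \<Rightarrow> real \<Rightarrow> real \<Rightarrow> schedule \<Rightarrow> real" where
  "sched_time kA kB tA tB S = sum_list (map (batch_time kA kB tA tB) S)"

definition fopt :: "real \<Rightarrow> real \<Rightarrow> real \<Rightarrow> real \<Rightarrow> nat \<Rightarrow> nat \<Rightarrow> ereal" where
  "fopt kA kB tA tB a b =
     Inf {ereal (sched_time kA kB tA tB S) | S. valid_schedule a b S}"

text \<open>cost(a,s) for one job type with parameters t,k: s batches (empty allowed)
  of total size a; infimum over the empty set is +infinity (the case s = 0, a > 0).\<close>
definition cost1 :: "real \<Rightarrow> real \<Rightarrow> nat \<Rightarrow> nat \<Rightarrow> ereal" where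
  "cost1 t k a s =
     Inf {ereal (real s * t + k * (\<Sum>x\<leftarrow>xs. (real x)^2)) | xs. length xs = s \<and> sum_list xs = a}"

definition mcost1 :: "real \<Rightarrow> real \<Rightarrow> nat \<Rightarrow> nat \<Rightarrow> ereal" where
  "mcost1 t k a s = Min ((\<lambda>s'. cost1 t k a s') ` {s'. s' \<le> s + 1 \<and> s \<le> s' + 1})"

definition cost :: "real \<Rightarrow> real \<Rightarrow> real \<Rightarrow> real \<Rightarrow> nat \<Rightarrow> nat \<Rightarrow> nat \<Rightarrow> ereal" where
  "cost kA kB tA tB a b s = cost1 tB kB b s + mcost1 tA kA a s"

end

(*
  A schedule is determined by the lists of its A- and B-batch sizes: both consist of positive
  numbers, their lengths differ by at most one because the types alternate, and the time of the
  schedule is the sum of the two single-type costs.  Taking s to be the number of B-batches gives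
  f(a,b) >= cost(a,b,s).  Conversely, a size list realising cost^B(b,s) with s <= b, or
  cost^A(a,s') with s' <= a, can be made positive without increasing its sum of squares (replace
  a pair of sizes 0, m with m >= 2 by 1, m - 1), and when s' > a the list of a ones is no worse
  since x <= x^2 and t^A >= 0.  Interleaving the two positive lists yields a schedule.
*)
theory Submission
  imports Defs
begin

definition sum_squares :: "nat list \<Rightarrow> nat" where
  "sum_squares xs = (\<Sum>x\<leftarrow>xs. x^2)"

definition batches_cost :: "real \<Rightarrow> real \<Rightarrow> nat list \<Rightarrow> real" where
  "batches_cost t k xs = real (length xs) * t + k * real (sum_squares xs)"

lemma real_sum_squares: "real (sum_squares xs) = (\<Sum>x\<leftarrow>xs. (real x)^2)"
  by (induction xs) (simp_all add: sum_squares_def)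

lemma finite_lists_length_sum: "finite {xs :: nat list. length xs = s \<and> sum_list xs = a}"
proof (rule finite_subset)
  show "{xs. length xs = s \<and> sum_list xs = a} \<subseteq> {xs. set xs \<subseteq> {0..a} \<and> length xs = s}"
    using member_le_sum_list by fastforce
qed (rule finite_lists_length_eq[OF finite_atLeastAtMost])

lemma cost1_eq:
  "cost1 t k a s =
     Inf ((\<lambda>xs. ereal (batches_cost t k xs)) ` {xs. length xs = s \<and> sum_list xs = a})"
  unfolding cost1_def batches_cost_def real_sum_squares by (rule arg_cong[where f = Inf]) auto

lemma cost1_le: "length xs = s \<Longrightarrow> sum_list xs = a \<Longrightarrow> cost1 t k a s \<le> batches_cost t k xs"
  unfolding cost1_eq by (rule Inf_lower) auto

lemma cost1_attained:
  assumes "cost1 t k a s \<noteq> \<infinity>"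
  obtains xs where "length xs = s" "sum_list xs = a" "cost1 t k a s = batches_cost t k xs"
proof -
  let ?L = "{xs. length xs = s \<and> sum_list xs = a}"
  have "?L \<noteq> {}"
  proof
    assume "?L = {}"
    then have "cost1 t k a s = \<infinity>"
      unfolding cost1_eq by (metis Inf_empty image_empty top_ereal_def)
    with assms show False ..
  qed
  then have "cost1 t k a s \<in> (\<lambda>xs. ereal (batches_cost t k xs)) ` ?L"
    unfolding cost1_eq using finite_lists_length_sum by (simp add: cInf_eq_Min)
  with that show ?thesis by blast
qed

lemma cost1_neq_minf: "cost1 t k a s \<noteq> -\<infinity>"
  by (cases "cost1 t k a s = \<infinity>") (auto elim: cost1_attained)

lemma finite_adjacent: "finite {s' :: nat. s' \<le> s + 1 \<and> s \<le> s' + 1}"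
  by (rule finite_subset[of _ "{..s + 1}"]) auto

lemma mcost1_le: "s' \<le> s + 1 \<Longrightarrow> s \<le> s' + 1 \<Longrightarrow> mcost1 t k a s \<le> cost1 t k a s'"
  unfolding mcost1_def using finite_adjacent by (intro Min_le) auto

lemma mcost1_attained:
  obtains s' where "s' \<le> s + 1" "s \<le> s' + 1" "mcost1 t k a s = cost1 t k a s'"
proof -
  have "mcost1 t k a s \<in> cost1 t k a ` {s'. s' \<le> s + 1 \<and> s \<le> s' + 1}"
    unfolding mcost1_def using finite_adjacent by (intro Min_in) auto
  with that show ?thesis by blast
qed

lemma length_le_sum_list: "0 \<notin> set xs \<Longrightarrow> length xs \<le> sum_list (xs :: nat list)"
  by (induction xs) auto

lemma large_elem_if_zero_mem:
  assumes "0 \<in> set xs" "length xs \<le> sum_list xs"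
  shows "\<exists>m \<in> set xs. 2 \<le> (m :: nat)"
proof (rule ccontr)
  assume "\<not> ?thesis"
  then have "sum_list (remove1 0 xs) \<le> length (remove1 0 xs)"
    using sum_list_mono[of "remove1 0 xs" id "\<lambda>_. 1"] set_remove1_subset[of 0 xs]
    by (force simp: sum_list_triv)
  moreover have "sum_list xs = sum_list (remove1 0 xs)"
    using sum_list_map_remove1[OF assms(1), of id] by simp
  moreover have "length (remove1 0 xs) < length xs"
    using assms(1) length_pos_if_in_set[OF assms(1)] by (simp add: length_remove1)
  ultimately show False
    using assms(2) by linarith
qed

lemma positive_rebalance:
  assumes "length xs \<le> sum_list xs"
  shows "\<exists>ys. 0 \<notin> set ys \<and> length ys = length xs \<and> sum_list ys = sum_list xs \<and>
           sum_squares ys \<le> sum_squares xs"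
  using assms
proof (induction "sum_squares xs" arbitrary: xs rule: less_induct)
  case less
  show ?case
  proof (cases "0 \<in> set xs")
    case False
    then show ?thesis by blast
  next
    case True
    obtain m where m: "m \<in> set xs" "2 \<le> m"
      using large_elem_if_zero_mem[OF True less.prems] by blast
    then obtain j where j: "m = Suc (Suc j)"
      by (metis add_2_eq_Suc le_Suc_ex)
    define rest where "rest = remove1 m (remove1 0 xs)"
    define xs' where "xs' = 1 # (m - 1) # rest"
    have m_mem: "m \<in> set (remove1 0 xs)"
      using m by simp
    have split: "(\<Sum>x\<leftarrow>xs. f x) = f 0 + f m + (\<Sum>x\<leftarrow>rest. f x)" for f :: "nat \<Rightarrow> nat"
      using sum_list_map_remove1[OF True, of f] sum_list_map_remove1[OF m_mem, of f]
      unfolding rest_def by simp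
    have "length xs' = length xs"
      using split[of "\<lambda>_. 1"] by (simp add: xs'_def sum_list_triv)
    moreover have "sum_list xs' = sum_list xs"
      using split[of id] j by (simp add: xs'_def)
    moreover have "sum_squares xs' < sum_squares xs"
      using split[of "\<lambda>x. x^2"] j by (simp add: xs'_def sum_squares_def power2_eq_square)
    ultimately show ?thesis
      using less.hyps[of xs'] less.prems by (metis order.strict_implies_order order.trans)
  qed
qed

lemma positive_sizes_cost_le:
  assumes "t \<ge> 0" "k \<ge> 0"
  obtains ys where "0 \<notin> set ys" "length ys = min (length xs) (sum_list xs)"
    "sum_list ys = sum_list xs" "batches_cost t k ys \<le> batches_cost t k xs"
proof (cases "length xs \<le> sum_list xs")
  case True
  with positive_rebalance obtain ys where "0 \<notin> set ys" "length ys = length xs"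
    "sum_list ys = sum_list xs" "sum_squares ys \<le> sum_squares xs"
    by blast
  with True assms that show ?thesis
    by (simp add: batches_cost_def mult_left_mono)
next
  case False
  let ?ys = "replicate (sum_list xs) (1 :: nat)"
  have "sum_squares ?ys \<le> sum_squares xs"
    using sum_list_mono[of xs id "\<lambda>x. x^2"]
    by (simp add: sum_squares_def sum_list_replicate power2_nat_le_imp_le)
  moreover have "real (length ?ys) * t \<le> real (length xs) * t"
    using False assms by (simp add: mult_right_mono)
  ultimately show ?thesis
    using False assms
    by (intro that[of ?ys])
      (auto simp: batches_cost_def sum_list_replicate intro!: add_mono mult_left_mono)
qed

definition sizes :: "jobtype \<Rightarrow> schedule \<Rightarrow> nat list" where
  "sizes T S = map snd (filter (\<lambda>bt. fst bt = T) S)"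

lemma sizes_simps [simp]:
  "sizes T [] = []"
  "sizes T ((T', n) # S) = (if T' = T then n # sizes T S else sizes T S)"
  by (simp_all add: sizes_def)

lemma sched_time_sizes:
  "sched_time kA kB tA tB S = batches_cost tA kA (sizes TA S) + batches_cost tB kB (sizes TB S)"
proof (induction S)
  case Nil
  then show ?case by (simp add: sched_time_def batches_cost_def sum_squares_def)
next
  case (Cons bt S)
  then show ?case
    by (cases bt; cases "fst bt")
       (auto simp: sched_time_def batches_cost_def batch_time_def sum_squares_def algebra_simps)
qed

lemma valid_schedule_iff:
  "valid_schedule a b S \<longleftrightarrow>
     0 \<notin> snd ` set S \<and> successively (\<lambda>x y. fst x \<noteq> fst y) S \<and>
     sum_list (sizes TA S) = a \<and> sum_list (sizes TB S) = b"
  by (force simp: valid_schedule_def sizes_def successively_conv_nth)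

lemma zero_notin_sizes: "0 \<notin> snd ` set S \<Longrightarrow> 0 \<notin> set (sizes T S)"
  by (force simp: sizes_def)

fun other :: "jobtype \<Rightarrow> jobtype" where
  "other TA = TB"
| "other TB = TA"

lemma other_other [simp]: "other (other T) = T"
  by (cases T) simp_all

lemma other_neq [simp]: "other T \<noteq> T" "T \<noteq> other T"
  by (cases T; simp)+

lemma neq_iff_other: "T' \<noteq> T \<longleftrightarrow> T' = other T"
  by (cases T; cases T') simp_all

lemma alternating_sizes_length_Cons:
  assumes "successively (\<lambda>x y. fst x \<noteq> fst y) ((T, n) # S)"
  shows "length (sizes (other T) ((T, n) # S)) \<le> length (sizes T ((T, n) # S)) \<and>
         length (sizes T ((T, n) # S)) \<le> Suc (length (sizes (other T) ((T, n) # S)))"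
  using assms
proof (induction S arbitrary: T n)
  case Nil
  then show ?case by simp
next
  case (Cons bt S)
  obtain T' m where bt: "bt = (T', m)" by (cases bt)
  with Cons.prems have "T' = other T" "successively (\<lambda>x y. fst x \<noteq> fst y) ((T', m) # S)"
    by (simp_all add: neq_iff_other)
  with Cons.IH[of T' m] bt show ?case by simp
qed

lemma alternating_sizes_length:
  assumes "successively (\<lambda>x y. fst x \<noteq> fst y) S"
  shows "length (sizes T S) \<le> Suc (length (sizes (other T) S))"
proof (cases S)
  case (Cons bt S')
  obtain T' n where bt: "bt = (T', n)" by (cases bt)
  show ?thesis
  proof (cases "T' = T")
    case True
    then show ?thesis using alternating_sizes_length_Cons[of T n S'] assms Cons bt by simp
  next
    case False
    then show ?thesis using alternating_sizes_length_Cons[of T' n S'] assms Cons bt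
      by (simp add: neq_iff_other)
  qed
qed simp

function interleave :: "jobtype \<Rightarrow> nat list \<Rightarrow> nat list \<Rightarrow> schedule" where
  "interleave T [] ys = []"
| "interleave T (x # xs) ys = (T, x) # interleave (other T) ys xs"
  by pat_completeness auto
termination
  by (relation "measure (\<lambda>(T, xs, ys). length xs + length ys)") auto

lemma sizes_interleave:
  "length ys \<le> length xs \<Longrightarrow> length xs \<le> Suc (length ys) \<Longrightarrow>
     sizes T (interleave T xs ys) = xs \<and> sizes (other T) (interleave T xs ys) = ys"
  by (induction T xs ys rule: interleave.induct) auto

lemma successively_interleave: "successively (\<lambda>x y. fst x \<noteq> fst y) (interleave T xs ys)"
proof (induction T xs ys rule: interleave.induct)
  case (2 T x xs ys)
  then show ?case
    by (cases ys) (auto simp: successively_Cons)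
qed simp

lemma zero_notin_interleave:
  "0 \<notin> set xs \<Longrightarrow> 0 \<notin> set ys \<Longrightarrow> 0 \<notin> snd ` set (interleave T xs ys)"
  by (induction T xs ys rule: interleave.induct) auto

lemma schedule_with_sizes:
  assumes "0 \<notin> set xs" "0 \<notin> set ys"
    and "length xs \<le> Suc (length ys)" "length ys \<le> Suc (length xs)"
  obtains S where "valid_schedule (sum_list xs) (sum_list ys) S" "sizes TA S = xs" "sizes TB S = ys"
proof -
  have "\<exists>S. sizes TA S = xs \<and> sizes TB S = ys \<and>
          0 \<notin> snd ` set S \<and> successively (\<lambda>x y. fst x \<noteq> fst y) S"
  proof (cases "length ys \<le> length xs")
    case True
    then show ?thesis
      using assms sizes_interleave[of ys xs TA] successively_interleave zero_notin_interleave
      by (intro exI[of _ "interleave TA xs ys"]) auto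
  next
    case False
    then show ?thesis
      using assms sizes_interleave[of xs ys TB] successively_interleave zero_notin_interleave
      by (intro exI[of _ "interleave TB ys xs"]) auto
  qed
  with that show ?thesis
    by (auto simp: valid_schedule_iff)
qed

lemma fopt_le_batches_cost:
  assumes "0 \<notin> set xs" "0 \<notin> set ys"
    and "length xs \<le> Suc (length ys)" "length ys \<le> Suc (length xs)"
  shows "fopt kA kB tA tB (sum_list xs) (sum_list ys)
           \<le> batches_cost tA kA xs + batches_cost tB kB ys"
proof -
  obtain S where "valid_schedule (sum_list xs) (sum_list ys) S" "sizes TA S = xs" "sizes TB S = ys"
    using schedule_with_sizes[OF assms] .
  then show ?thesis
    unfolding fopt_def by (intro Inf_lower) (auto simp: sched_time_sizes)
qed

lemma Min_cost_le_fopt: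
  "Min (cost kA kB tA tB a b ` {0..min b (a + 1)}) \<le> fopt kA kB tA tB a b"
  unfolding fopt_def
proof (rule Inf_greatest)
  fix z
  assume "z \<in> {ereal (sched_time kA kB tA tB S) |S. valid_schedule a b S}"
  then obtain S where S: "valid_schedule a b S" and z: "z = sched_time kA kB tA tB S"
    by blast
  let ?A = "sizes TA S" and ?B = "sizes TB S"
  have sums: "sum_list ?A = a" "sum_list ?B = b"
    and alt: "successively (\<lambda>x y. fst x \<noteq> fst y) S"
    and pos: "0 \<notin> set ?A" "0 \<notin> set ?B"
    using S zero_notin_sizes by (auto simp: valid_schedule_iff)
  have adj: "length ?A \<le> length ?B + 1" "length ?B \<le> length ?A + 1"
    using alternating_sizes_length[OF alt, of TA] alternating_sizes_length[OF alt, of TB] by simp_all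
  have "length ?B \<in> {0..min b (a + 1)}"
    using length_le_sum_list[OF pos(1)] length_le_sum_list[OF pos(2)] sums adj by auto
  then have "Min (cost kA kB tA tB a b ` {0..min b (a + 1)}) \<le> cost kA kB tA tB a b (length ?B)"
    by (intro Min_le) auto
  also have "\<dots> \<le> cost1 tB kB b (length ?B) + cost1 tA kA a (length ?A)"
    unfolding cost_def using adj by (intro add_left_mono mcost1_le)
  also have "\<dots> \<le> ereal (batches_cost tB kB ?B) + ereal (batches_cost tA kA ?A)"
    using sums by (intro add_mono cost1_le) simp_all
  also have "\<dots> = z"
    by (simp add: z sched_time_sizes)
  finally show "Min (cost kA kB tA tB a b ` {0..min b (a + 1)}) \<le> z" .
qed

lemma fopt_le_cost:
  assumes "kA \<ge> 0" "kB \<ge> 0" "tA \<ge> 0" "tB \<ge> 0" "s \<le> min b (a + 1)"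
  shows "fopt kA kB tA tB a b \<le> cost kA kB tA tB a b s"
proof -
  obtain s' where s': "s' \<le> s + 1" "s \<le> s' + 1" and mc: "mcost1 tA kA a s = cost1 tA kA a s'"
    using mcost1_attained .
  have cost: "cost kA kB tA tB a b s = cost1 tA kA a s' + cost1 tB kB b s"
    by (simp add: cost_def mc add.commute)
  show ?thesis
  proof (cases "cost1 tA kA a s' = \<infinity> \<or> cost1 tB kB b s = \<infinity>")
    case True
    then show ?thesis
      using cost1_neq_minf by (auto simp: cost)
  next
    case False
    then obtain xs ys where xs: "length xs = s'" "sum_list xs = a"
        "cost1 tA kA a s' = batches_cost tA kA xs"
      and ys: "length ys = s" "sum_list ys = b" "cost1 tB kB b s = batches_cost tB kB ys"
      using cost1_attained by metis
    obtain xs' where xs': "0 \<notin> set xs'" "length xs' = min s' a" "sum_list xs' = a"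
        "batches_cost tA kA xs' \<le> batches_cost tA kA xs"
      using positive_sizes_cost_le[OF assms(3,1), of xs] xs by metis
    obtain ys' where ys': "0 \<notin> set ys'" "length ys' = s" "sum_list ys' = b"
        "batches_cost tB kB ys' \<le> batches_cost tB kB ys"
      using positive_sizes_cost_le[OF assms(4,2), of ys] ys assms(5)
      by (metis min.absorb1 min.boundedE)
    have "fopt kA kB tA tB a b \<le> batches_cost tA kA xs' + batches_cost tB kB ys'"
      using fopt_le_batches_cost[OF xs'(1) ys'(1)] xs' ys' s' assms(5) by auto
    also have "\<dots> \<le> ereal (batches_cost tA kA xs + batches_cost tB kB ys)"
      using xs'(4) ys'(4) by simp
    finally show ?thesis
      by (simp add: cost xs(3) ys(3))
  qed
qed

theorem lemma1:
  fixes kA kB tA tB :: real and a b :: nat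
  assumes "kA \<ge> 0" "kB \<ge> 0" "tA \<ge> 0" "tB \<ge> 0"
  shows "fopt kA kB tA tB a b = Min ((\<lambda>s. cost kA kB tA tB a b s) ` {0..min b (a + 1)})"
proof (rule antisym)
  let ?costs = "cost kA kB tA tB a b ` {0..min b (a + 1)}"
  have "Min ?costs \<in> ?costs"
    by (intro Min_in) auto
  then obtain s where "s \<in> {0..min b (a + 1)}" "Min ?costs = cost kA kB tA tB a b s"
    by blast
  with fopt_le_cost[OF assms] show "fopt kA kB tA tB a b \<le> Min ?costs"
    by simp
qed (rule Min_cost_le_fopt)

end
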